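(* Let $e\in K\setminus\{0\}$ and $f=\|\cdot\|e:X\to Y$. Then $D_{X^*}e\subset\widehat\partial f(0)$, where $D_{X^*}e=\{x^*(\cdot)e: x^*\in D_{X^*}\}$, and for every $y^*\in K_e^+$, $$y^*(\widehat\partial f(0))\subset y^*(e)D_{X^*}.$$
   Context: $X,Y$ are real normed spaces with duals $X^*,Y^*$; $D_{X^*}$ is the closed unit ball of $X^*$; $B(X,Y)$ is the space of bounded linear operators $X\to Y$; $B(x,\delta)$ is the open ball and $D_Y$ the closed unit ball of $Y$. $K\subset Y$ is a pointed closed convex cone, $K^+=\{y^*\in Y^*: y^*(k)\ge0\ \forall k\in K\}$, and $K_e^+=\{y^*\in K^+: y^*(e)\neq0\}$. For $f:X\to Y$, $\widehat\partial f(\bar x)$ is the set of all $T\in B(X,Y)$ such that for every $\varepsilon>0$ there is $\delta>0$ with $f(x)+K\subset f(\bar x)+K+T(x-\bar x)+\varepsilon\|x-\bar x\|D_Y$ for all $x\in B(\bar x,\delta)$. For $\mathcal T\subset B(X,Y)$, $y^*(\mathcal T)=\{y^*\circ T:T\in\mathcal T\}\subset X^*$. *)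

theory Defs
  imports "HOL-Analysis.Analysis"
begin

definition dual_unit_ball :: "('a::real_normed_vector \<Rightarrow> real) set" where
  "dual_unit_ball = {xs. bounded_linear xs \<and> onorm xs \<le> 1}"

definition pointed_closed_convex_cone :: "'b::real_normed_vector set \<Rightarrow> bool" where
  "pointed_closed_convex_cone K \<longleftrightarrow> closed K \<and> convex K \<and> cone K \<and> K \<noteq> {}
     \<and> K \<inter> uminus ` K = {0}"

definition dual_cone :: "'b::real_normed_vector set \<Rightarrow> ('b \<Rightarrow> real) set" where
  "dual_cone K = {ys. bounded_linear ys \<and> (\<forall>k\<in>K. ys k \<ge> 0)}"

definition dual_cone_e :: "'b::real_normed_vector set \<Rightarrow> 'b \<Rightarrow> ('b \<Rightarrow> real) set" where
  "dual_cone_e K e = {ys \<in> dual_cone K. ys e \<noteq> 0}"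

definition frechet_subdiff ::
  "'b::real_normed_vector set \<Rightarrow> ('a::real_normed_vector \<Rightarrow> 'b) \<Rightarrow> 'a \<Rightarrow> ('a \<Rightarrow> 'b) set" where
  "frechet_subdiff K f xb = {T. bounded_linear T \<and>
     (\<forall>\<epsilon>>0. \<exists>\<delta>>0. \<forall>x\<in>ball xb \<delta>.
        (\<lambda>k. f x + k) ` K \<subseteq>
        {f xb + k + T (x - xb) + (\<epsilon> * norm (x - xb)) *\<^sub>R d | k d. k \<in> K \<and> norm d \<le> 1})}"

end

theory Submission
  imports Defs
begin

text \<open>For \<open>x\<^sup>* \<in> D\<^sub>X\<^sub>*\<close> the map \<open>\<parallel>x\<parallel>e - x\<^sup>*(x)e\<close> takes values in \<open>K\<close>, so \<open>x\<^sup>*(\<cdot>)e\<close> is even a global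
  \<open>K\<close>-subgradient of \<open>f = \<parallel>\<cdot>\<parallel>e\<close>. Conversely, scalarizing a Frechet subgradient \<open>T\<close> with
  \<open>y\<^sup>* \<in> K\<^sup>+\<close> and using positive homogeneity of \<open>f\<close> to blow up the local inequality gives
  \<open>y\<^sup>*(T x) \<le> y\<^sup>*(e)\<parallel>x\<parallel>\<close> for all \<open>x\<close>; applied to \<open>\<plusminus>x\<close> this puts \<open>y\<^sup>* \<circ> T\<close> into \<open>y\<^sup>*(e)D\<^sub>X\<^sub>*\<close>.\<close>

lemma mem_frechet_subdiffI_cone_minorant:
  assumes "convex K" "cone K" "bounded_linear T"
    and minorant: "\<And>x. f x - f xb - T (x - xb) \<in> K"
  shows "T \<in> frechet_subdiff K f xb"
  unfolding frechet_subdiff_def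
proof (intro CollectI conjI allI impI assms(3))
  fix \<epsilon> :: real
  have add_mem: "a + b \<in> K" if "a \<in> K" "b \<in> K" for a b
    using assms(1,2) that convex_cone by blast
  show "\<exists>\<delta>>0. \<forall>x\<in>ball xb \<delta>. (\<lambda>k. f x + k) ` K \<subseteq>
    {f xb + k + T (x - xb) + (\<epsilon> * norm (x - xb)) *\<^sub>R d | k d. k \<in> K \<and> norm d \<le> 1}"
  proof (intro exI[of _ 1] conjI ballI subsetI)
    fix x y assume "y \<in> (\<lambda>k. f x + k) ` K"
    then obtain k where k: "k \<in> K" and y: "y = f x + k" by blast
    have "y = f xb + (f x - f xb - T (x - xb) + k) + T (x - xb) + (\<epsilon> * norm (x - xb)) *\<^sub>R 0"
      unfolding y by (simp add: algebra_simps)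
    with add_mem[OF minorant k] show "y \<in> {f xb + k + T (x - xb) + (\<epsilon> * norm (x - xb)) *\<^sub>R d
        | k d. k \<in> K \<and> norm d \<le> 1}"
      by fastforce
  qed simp
qed

lemma dual_unit_ball_abs_le_norm:
  assumes "xs \<in> dual_unit_ball"
  shows "\<bar>xs x\<bar> \<le> norm x"
proof -
  have bl: "bounded_linear xs" and on: "onorm xs \<le> 1"
    using assms by (auto simp: dual_unit_ball_def)
  have "\<bar>xs x\<bar> \<le> onorm xs * norm x" using onorm[OF bl, of x] by simp
  also have "\<dots> \<le> norm x" using on by (simp add: mult_left_le_one_le onorm_pos_le[OF bl])
  finally show ?thesis .
qed

lemma scaled_dual_unit_ballI:
  fixes g :: "'a::real_normed_vector \<Rightarrow> real"
  assumes "bounded_linear g" "c > 0" and bound: "\<And>x. \<bar>g x\<bar> \<le> c * norm x"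
  shows "g \<in> (\<lambda>xs x. c * xs x) ` dual_unit_ball"
proof
  show "g = (\<lambda>x. c * (g x / c))" using \<open>c > 0\<close> by simp
  have "bounded_linear (\<lambda>x. g x / c)"
    using bounded_linear_compose[OF bounded_linear_divide assms(1)] .
  moreover have "onorm (\<lambda>x. g x / c) \<le> 1"
  proof (rule onorm_bound)
    fix x show "norm (g x / c) \<le> 1 * norm x"
      using bound[of x] \<open>c > 0\<close> by (simp add: abs_divide divide_le_eq mult.commute)
  qed simp
  ultimately show "(\<lambda>x. g x / c) \<in> dual_unit_ball" by (simp add: dual_unit_ball_def)
qed

lemma frechet_subdiff_scalarized_le:
  assumes "0 \<in> K" and T: "T \<in> frechet_subdiff K f xb" and ys: "ys \<in> dual_cone K" and "\<epsilon> > 0"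
  obtains \<delta> where "\<delta> > 0"
    "\<And>x. x \<in> ball xb \<delta> \<Longrightarrow> ys (T (x - xb)) \<le> ys (f x) - ys (f xb) + \<epsilon> * onorm ys * norm (x - xb)"
proof -
  have bl: "bounded_linear ys" and pos: "\<And>k. k \<in> K \<Longrightarrow> ys k \<ge> 0"
    using ys by (auto simp: dual_cone_def)
  interpret ys: bounded_linear ys by fact
  obtain \<delta> where "\<delta> > 0" and H: "\<forall>x\<in>ball xb \<delta>. (\<lambda>k. f x + k) ` K \<subseteq>
      {f xb + k + T (x - xb) + (\<epsilon> * norm (x - xb)) *\<^sub>R d | k d. k \<in> K \<and> norm d \<le> 1}"
    using T \<open>\<epsilon> > 0\<close> unfolding frechet_subdiff_def by blast
  have "ys (T (x - xb)) \<le> ys (f x) - ys (f xb) + \<epsilon> * onorm ys * norm (x - xb)"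
    if x: "x \<in> ball xb \<delta>" for x
  proof -
    have "f x + 0 \<in> (\<lambda>k. f x + k) ` K" using \<open>0 \<in> K\<close> by blast
    with H x obtain k d where "k \<in> K" "norm d \<le> 1"
      and eq: "f x + 0 = f xb + k + T (x - xb) + (\<epsilon> * norm (x - xb)) *\<^sub>R d"
      by blast
    have "\<bar>ys d\<bar> \<le> onorm ys * norm d" using onorm[OF bl, of d] by simp
    also have "\<dots> \<le> onorm ys" using \<open>norm d \<le> 1\<close> onorm_pos_le[OF bl] by (rule mult_left_le)
    finally have "- onorm ys \<le> ys d" by linarith
    hence "(\<epsilon> * norm (x - xb)) * (- onorm ys) \<le> (\<epsilon> * norm (x - xb)) * ys d"
      using \<open>\<epsilon> > 0\<close> by (intro mult_left_mono) simp_all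
    hence "- (\<epsilon> * onorm ys * norm (x - xb)) \<le> \<epsilon> * norm (x - xb) * ys d"
      by (simp add: algebra_simps)
    moreover have "ys (f x) = ys (f xb) + ys k + ys (T (x - xb)) + \<epsilon> * norm (x - xb) * ys d"
      using arg_cong[OF eq, of ys] by (simp add: ys.add ys.scale)
    ultimately show ?thesis using pos[OF \<open>k \<in> K\<close>] by linarith
  qed
  with \<open>\<delta> > 0\<close> show thesis by (rule that)
qed

text \<open>The local inequality at \<open>t x\<close>, divided by \<open>t\<close>, holds at \<open>x\<close> with an arbitrarily small error.\<close>

lemma frechet_subdiff_pos_homogeneous_scalarized_le:
  assumes "0 \<in> K" and T: "T \<in> frechet_subdiff K f 0" and ys: "ys \<in> dual_cone K"
    and homogeneous: "\<And>t x. t > 0 \<Longrightarrow> f (t *\<^sub>R x) = t *\<^sub>R f x"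
  shows "ys (T x) \<le> ys (f x)"
proof (rule field_le_epsilon)
  fix \<epsilon> :: real assume "\<epsilon> > 0"
  interpret T: bounded_linear T using T by (simp add: frechet_subdiff_def)
  interpret ys: bounded_linear ys using ys by (simp add: dual_cone_def)
  define c where "c = onorm ys * norm x + 1"
  have "c > 0" unfolding c_def by (simp add: add_nonneg_pos onorm_pos_le[OF ys.bounded_linear])
  obtain \<delta> where "\<delta> > 0" and local_le: "\<And>z. z \<in> ball 0 \<delta> \<Longrightarrow>
      ys (T (z - 0)) \<le> ys (f z) - ys (f 0) + \<epsilon> / c * onorm ys * norm (z - 0)"
    using frechet_subdiff_scalarized_le[OF assms(1-3), of "\<epsilon> / c"] \<open>\<epsilon> > 0\<close> \<open>c > 0\<close> by auto
  define t where "t = \<delta> / (norm x + 1)"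
  have "t > 0" unfolding t_def using \<open>\<delta> > 0\<close> by (simp add: add_nonneg_pos)
  have "norm (t *\<^sub>R x) < \<delta>"
    using \<open>\<delta> > 0\<close> by (simp add: t_def divide_less_eq add_nonneg_pos)
  moreover have "f 0 = 0"
    using homogeneous[of 2 0] by (simp add: scaleR_2)
  moreover have "ys (T (t *\<^sub>R x)) = t * ys (T x)" "ys (f (t *\<^sub>R x)) = t * ys (f x)"
    using homogeneous[OF \<open>t > 0\<close>] by (simp_all add: T.scale ys.scale)
  ultimately have "t * ys (T x) \<le> t * ys (f x) + \<epsilon> / c * onorm ys * (t * norm x)"
    using local_le[of "t *\<^sub>R x"] \<open>t > 0\<close> by (simp add: ys.zero)
  also have "\<dots> = t * (ys (f x) + \<epsilon> / c * (onorm ys * norm x))"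
    by (simp add: algebra_simps)
  finally have "ys (T x) \<le> ys (f x) + \<epsilon> / c * (onorm ys * norm x)"
    using \<open>t > 0\<close> by simp
  also have "\<epsilon> / c * (onorm ys * norm x) \<le> \<epsilon>"
    using \<open>\<epsilon> > 0\<close> \<open>c > 0\<close> by (simp add: c_def field_simps)
  finally show "ys (T x) \<le> ys (f x) + \<epsilon>" by simp
qed

lemma dual_unit_ball_scaleR_mem_frechet_subdiff_norm:
  assumes "convex K" "cone K" "e \<in> K" and xs: "xs \<in> dual_unit_ball"
  shows "(\<lambda>x. xs x *\<^sub>R e) \<in> frechet_subdiff K (\<lambda>x. norm x *\<^sub>R e) 0"
proof (rule mem_frechet_subdiffI_cone_minorant)
  show "bounded_linear (\<lambda>x. xs x *\<^sub>R e)"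
    using xs by (auto simp: dual_unit_ball_def intro: bounded_linear_compose[OF bounded_linear_scaleR_left])
  show "norm x *\<^sub>R e - norm 0 *\<^sub>R e - xs (x - 0) *\<^sub>R e \<in> K" for x
    using \<open>cone K\<close> \<open>e \<in> K\<close> dual_unit_ball_abs_le_norm[OF xs, of x]
    by (simp add: cone_def flip: scaleR_diff_left)
qed fact+

lemma comp_frechet_subdiff_norm_mem_scaled_dual_unit_ball:
  assumes "0 \<in> K" "e \<in> K" and ys: "ys \<in> dual_cone_e K e"
    and T: "T \<in> frechet_subdiff K (\<lambda>x. norm x *\<^sub>R e) 0"
  shows "ys \<circ> T \<in> (\<lambda>xs x. ys e * xs x) ` dual_unit_ball"
proof (rule scaled_dual_unit_ballI)
  have "ys \<in> dual_cone K" "ys e > 0"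
    using ys \<open>e \<in> K\<close> by (auto simp: dual_cone_e_def dual_cone_def order_le_neq_trans)
  interpret T: bounded_linear T using T by (simp add: frechet_subdiff_def)
  interpret ys: bounded_linear ys using \<open>ys \<in> dual_cone K\<close> by (simp add: dual_cone_def)
  have le: "ys (T x) \<le> ys e * norm x" for x
    using frechet_subdiff_pos_homogeneous_scalarized_le[OF \<open>0 \<in> K\<close> T \<open>ys \<in> dual_cone K\<close>]
    by (simp add: ys.scale mult.commute)
  show "\<bar>(ys \<circ> T) x\<bar> \<le> ys e * norm x" for x
    using le[of x] le[of "- x"] by (simp add: T.neg ys.neg)
  show "bounded_linear (ys \<circ> T)"
    using bounded_linear_compose[OF ys.bounded_linear T.bounded_linear] by (simp add: comp_def)
  show "ys e > 0" by fact
qed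

theorem mainTheorem12:
  fixes K :: "'b::real_normed_vector set" and e :: 'b
  assumes "pointed_closed_convex_cone K"
    and "e \<in> K - {0}"
  shows "((\<lambda>xs. (\<lambda>x. xs x *\<^sub>R e)) ` (dual_unit_ball :: ('a::real_normed_vector \<Rightarrow> real) set)
           \<subseteq> frechet_subdiff K (\<lambda>x::'a. norm x *\<^sub>R e) 0)
    \<and> (\<forall>ys \<in> dual_cone_e K e.
           (\<lambda>T. ys \<circ> T) ` frechet_subdiff K (\<lambda>x::'a. norm x *\<^sub>R e) 0
             \<subseteq> (\<lambda>xs. (\<lambda>x. ys e * xs x)) ` (dual_unit_ball :: ('a \<Rightarrow> real) set))"
proof -
  have "convex K" "cone K" "0 \<in> K" "e \<in> K"
    using assms cone_contains_0 by (auto simp: pointed_closed_convex_cone_def)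
  then show ?thesis
    by (blast intro: dual_unit_ball_scaleR_mem_frechet_subdiff_norm
        comp_frechet_subdiff_norm_mem_scaled_dual_unit_ball)
qed

end
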